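(* For $\lambda\in[0,1]$ and $x,y\in\mathbb{R}^3$ define $$W_\lambda(x,y)=\lambda\left(\max\{|x|,|y|\}+\frac{(\min\{|x|,|y|\})^2}{|x-y|}\right)+(1-\lambda)\left(|x-y|+\frac23\,\frac{(\min\{|x|,|y|\})^2}{\max\{|x|,|y|\}}\right).$$ Then $$\sup_{\lambda\in[0,1]}\ \inf_{x,y\in\mathbb{R}^3,\ (x,y)\ne(0,0)}\frac{W_\lambda(x,y)}{|x|+|y|}>0.8218.$$
   Context: Conventions: a term $\frac{(\min\{|x|,|y|\})^2}{|x-y|}$ with $x=y\neq0$ is $+\infty$; terms with $\min\{|x|,|y|\}=0$ are $0$. *)

theory Defs
  imports "HOL-Analysis.Analysis" "HOL-Library.Extended_Real"
begin

definition near_term :: "real^3 \<Rightarrow> real^3 \<Rightarrow> ereal" where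
  "near_term x y =
     (let m = min (norm x) (norm y) in
      if m = 0 then 0 else if x = y then \<infinity> else ereal (m^2 / norm (x - y)))"

definition far_term :: "real^3 \<Rightarrow> real^3 \<Rightarrow> real" where
  "far_term x y =
     (let m = min (norm x) (norm y); M = max (norm x) (norm y) in
      if m = 0 then 0 else m^2 / M)"

definition W :: "real \<Rightarrow> real^3 \<Rightarrow> real^3 \<Rightarrow> ereal" where
  "W l x y =
     ereal l * (ereal (max (norm x) (norm y)) + near_term x y)
     + ereal (1 - l) * ereal (norm (x - y) + 2/3 * far_term x y)"

end

theory Submission
  imports Defs
begin

text \<open>Write \<open>M\<close>, \<open>m\<close> for the larger and smaller of \<open>|x|\<close>, \<open>|y|\<close> and \<open>d = |x - y|\<close>.
  For \<open>\<lambda> = 65\<^sup>2 / (65\<^sup>2 + 28\<^sup>2)\<close> the two terms of \<open>W\<^sub>\<lambda>\<close> containing \<open>d\<close> are bounded below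
  by AM-GM, independently of \<open>d\<close>: \<open>\<lambda> m\<^sup>2/d + (1 - \<lambda>) d \<ge> 2\<cdot>65\<cdot>28/(65\<^sup>2 + 28\<^sup>2) m\<close>.
  What remains is a quadratic form in \<open>M\<close>, \<open>m\<close> divided by \<open>M\<close>, and that form dominates
  \<open>0.821806 (M + m) M\<close> because the difference is positive definite. The degenerate
  cases \<open>m = 0\<close> (ratio 1) and \<open>x = y\<close> (ratio \<open>\<infinity>\<close>) are harmless.\<close>

lemma weighted_am_gm:
  fixes p q m d :: real
  assumes "d > 0"
  shows "2 * p * q * m \<le> p\<^sup>2 * (m\<^sup>2 / d) + q\<^sup>2 * d"
proof -
  have "0 \<le> (p * m - q * d)\<^sup>2 / d"
    using assms by simp
  also have "\<dots> = p\<^sup>2 * (m\<^sup>2 / d) + q\<^sup>2 * d - 2 * p * q * m"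
    using assms by (simp add: field_simps power2_eq_square)
  finally show ?thesis by simp
qed

lemma quadratic_form_bound:
  fixes M m :: real
  assumes "M > 0"
  shows "821806/1000000 * (M + m)
           \<le> 4225/5009 * M + 3640/5009 * m + 784/5009 * (2/3 * (m\<^sup>2 / M))"
proof -
  have "4225/5009 * M + 3640/5009 * m + 784/5009 * (2/3 * (m\<^sup>2 / M)) - 821806/1000000 * (M + m)
      = (54286873/2504500000 * (M - 238213127/108573746 * m)\<^sup>2
         + 7152102645613/1631537681142000000 * m\<^sup>2) / M"
    using assms by (simp add: field_simps power2_eq_square)
  also have "\<dots> \<ge> 0"
    using assms by simp
  finally show ?thesis by simp
qed

lemma W_bound_real:
  fixes M m d :: real
  assumes "M > 0" "d > 0"
  shows "821806/1000000 * (M + m)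
           \<le> 4225/5009 * (M + m\<^sup>2 / d) + (1 - 4225/5009) * (d + 2/3 * (m\<^sup>2 / M))"
proof -
  have "3640/5009 * m \<le> 4225/5009 * (m\<^sup>2 / d) + 784/5009 * d"
    using weighted_am_gm[OF \<open>d > 0\<close>, of "65 / sqrt 5009" "28 / sqrt 5009" m]
    by (simp add: power_divide)
  moreover have "821806/1000000 * (M + m)
      \<le> 4225/5009 * M + 3640/5009 * m + 784/5009 * (2/3 * (m\<^sup>2 / M))"
    using quadratic_form_bound[OF \<open>M > 0\<close>] .
  ultimately have "821806/1000000 * (M + m)
      \<le> 4225/5009 * (M + m\<^sup>2 / d) + 784/5009 * (d + 2/3 * (m\<^sup>2 / M))"
    unfolding distrib_left by linarith
  then show ?thesis
    by simp
qed

lemma W_min_norm_zero: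
  assumes "min (norm x) (norm y) = 0"
  shows "W l x y = ereal (norm x + norm y)"
proof -
  have "x = 0 \<or> y = 0"
    using assms by (auto simp: min_def split: if_splits)
  then have "norm (x - y) = norm x + norm y" "max (norm x) (norm y) = norm x + norm y"
    by auto
  moreover have "near_term x y = 0" "far_term x y = 0"
    using assms by (simp_all add: near_term_def far_term_def)
  ultimately have "W l x y = ereal (l * (norm x + norm y) + (1 - l) * (norm x + norm y))"
    by (simp add: W_def)
  then show ?thesis
    by (simp add: algebra_simps)
qed

lemma W_diagonal:
  assumes "x \<noteq> 0" "l > 0"
  shows "W l x x = \<infinity>"
  using assms by (simp add: W_def near_term_def)

lemma W_off_diagonal:
  assumes "min (norm x) (norm y) \<noteq> 0" "x \<noteq> y"
  defines "m \<equiv> min (norm x) (norm y)" and "M \<equiv> max (norm x) (norm y)"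
    and "d \<equiv> norm (x - y)"
  shows "W l x y = ereal (l * (M + m\<^sup>2 / d) + (1 - l) * (d + 2/3 * (m\<^sup>2 / M)))"
  using assms by (simp add: W_def near_term_def far_term_def Let_def flip: ereal_max)

lemma W_ratio_lower_bound:
  fixes x y :: "real^3"
  assumes "(x, y) \<noteq> (0, 0)"
  shows "ereal (821806/1000000) \<le> W (4225/5009) x y / ereal (norm x + norm y)"
proof -
  define m where "m = min (norm x) (norm y)"
  define M where "M = max (norm x) (norm y)"
  have sum_pos: "norm x + norm y > 0"
    using assms by (auto simp: add_pos_nonneg add_nonneg_pos)
  have sum_eq: "norm x + norm y = M + m"
    by (simp add: M_def m_def max_def min_def)
  consider "m = 0" | "m \<noteq> 0" "x = y" | "m \<noteq> 0" "x \<noteq> y"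
    by blast
  then show ?thesis
  proof cases
    case 1
    then show ?thesis
      using sum_pos by (simp add: W_min_norm_zero m_def)
  next
    case 2
    then show ?thesis
      using sum_pos by (simp add: W_diagonal m_def)
  next
    case 3
    have "M > 0" "norm (x - y) > 0"
      using 3 by (auto simp: M_def m_def min_def max_def split: if_splits)
    then show ?thesis
      using 3 W_bound_real[of M "norm (x - y)" m] sum_pos
      by (simp add: W_off_diagonal m_def M_def sum_eq pos_le_divide_eq)
  qed
qed

theorem lemma10:
  shows "(SUP l \<in> {0..1::real}.
            INF p \<in> {p :: (real^3) \<times> (real^3). p \<noteq> (0, 0)}.
              W l (fst p) (snd p) / ereal (norm (fst p) + norm (snd p)))
         > ereal 0.8218"
proof -
  have "ereal 0.8218 < ereal (821806/1000000)"
    by simp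
  also have "\<dots> \<le> (INF p \<in> {p :: (real^3) \<times> (real^3). p \<noteq> (0, 0)}.
              W (4225/5009) (fst p) (snd p) / ereal (norm (fst p) + norm (snd p)))"
    by (rule INF_greatest, rule W_ratio_lower_bound) simp
  also have "\<dots> \<le> (SUP l \<in> {0..1::real}.
            INF p \<in> {p :: (real^3) \<times> (real^3). p \<noteq> (0, 0)}.
              W l (fst p) (snd p) / ereal (norm (fst p) + norm (snd p)))"
    by (rule SUP_upper) simp
  finally show ?thesis .
qed

end
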